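(* Let $n\ge 2$ and $m\ge 2$ be integers. Let $M_1=(\mu_{ij})$ be the $n\times n$ $0/1$ matrix with $\mu_{1,n-1}=\mu_{1,n}=1$, $\mu_{i,i-1}=1$ for $2\le i\le n$, and all other entries $0$, and let $\mathbb{A}_0$ be the order $m$, dimension $n$ tensor with $(\mathbb{A}_0)_{ij\ldots j}=\mu_{ij}$ for all $i,j\in[n]$ and $(\mathbb{A}_0)_{ii_2\ldots i_m}=0$ whenever $i_2,\ldots,i_m$ are not all equal. Then: (i) if $k$ is an integer with $1\le k\le n^2-3n+2$ and $k=(n-1)q+r$ with $q\ge0$, $1\le r\le n-1$, then $S_k(\mathbb{A}_0,n-1)=\{r-q-1,\ldots,r-1,r\}\pmod n$ and $|S_k(\mathbb{A}_0,n-1)|=q+2$; (ii) for every positive integer $t$ and every $j\in\{1,\ldots,n-2\}$, $S_{t+(n-1-j)}(\mathbb{A}_0,j)=S_t(\mathbb{A}_0,n-1)$, and also $S_{t+n-1}(\mathbb{A}_0,n)=S_t(\mathbb{A}_0,n-1)$.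
   Context: For an integer $a$, $|a|_n$ denotes the least positive integer congruent to $a$ modulo $n$, and $\{a_1,\ldots,a_s\}\pmod n$ means $\{|a_1|_n,\ldots,|a_s|_n\}$. General product of tensors of dimension $n$: for $\mathbb{A}$ of order $m\ge2$ and $\mathbb{B}$ of order $k\ge1$, $(\mathbb{A}\mathbb{B})_{i\alpha_1\ldots\alpha_{m-1}}=\sum_{i_2,\ldots,i_m=1}^n a_{ii_2\ldots i_m}b_{i_2\alpha_1}\cdots b_{i_m\alpha_{m-1}}$ ($\alpha_l\in[n]^{k-1}$), a tensor of order $(m-1)(k-1)+1$; it is associative and $\mathbb{A}^k$ is the $k$-fold power. The majorization matrix of a tensor $\mathbb{C}$ is $(M(\mathbb{C}))_{ij}=c_{ij\ldots j}$. For a nonnegative tensor $\mathbb{A}$, $j\in[n]$ and $k\ge1$, $S_k(\mathbb{A},j)=\{u\in[n]\mid (M(\mathbb{A}^k))_{uj}>0\}$. *)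

theory Defs
  imports Complex_Main
begin

text \<open>A tensor of dimension n is represented as a real-valued function on index lists;
  the order of the tensor is the length of the index lists at which it is meaningful.
  Indices range over [n] = {1..n}.\<close>

type_synonym tensor = "nat list \<Rightarrow> real"

text \<open>General product of an order-m tensor A and an order-k tensor B (dimension n):
  (A B)_{i alpha_1 ... alpha_{m-1}} = sum_{i_2..i_m} a_{i i_2 .. i_m} b_{i_2 alpha_1} ... b_{i_m alpha_{m-1}},
  where each alpha_l is a block of k-1 indices.\<close>

definition tprod :: "nat \<Rightarrow> nat \<Rightarrow> nat \<Rightarrow> tensor \<Rightarrow> tensor \<Rightarrow> tensor" where
  "tprod n m k A B idx =
     (case idx of [] \<Rightarrow> 0
      | i # rest \<Rightarrow>
          (\<Sum>is\<in>{xs. length xs = m - 1 \<and> set xs \<subseteq> {1..n}}.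
              A (i # is) *
              (\<Prod>l<m - 1. B ((is ! l) # take (k - 1) (drop (l * (k - 1)) rest)))))"

fun tpow :: "nat \<Rightarrow> nat \<Rightarrow> tensor \<Rightarrow> nat \<Rightarrow> tensor" where
  "tpow n m A 0 = A"
| "tpow n m A (Suc 0) = A"
| "tpow n m A (Suc (Suc k)) = tprod n m ((m - 1) ^ Suc k + 1) A (tpow n m A (Suc k))"

definition major :: "nat \<Rightarrow> tensor \<Rightarrow> nat \<Rightarrow> nat \<Rightarrow> real" where
  "major ord C i j = C (i # replicate (ord - 1) j)"

definition Sset :: "nat \<Rightarrow> nat \<Rightarrow> tensor \<Rightarrow> nat \<Rightarrow> nat \<Rightarrow> nat set" where
  "Sset n m A k j = {u \<in> {1..n}. major ((m - 1) ^ k + 1) (tpow n m A k) u j > 0}"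

definition mu :: "nat \<Rightarrow> nat \<Rightarrow> nat \<Rightarrow> real" where
  "mu n i j = (if (i = 1 \<and> (j = n - 1 \<or> j = n)) \<or> (2 \<le> i \<and> i \<le> n \<and> j = i - 1) then 1 else 0)"

definition A0 :: "nat \<Rightarrow> nat \<Rightarrow> tensor" where
  "A0 n m idx =
     (case idx of [] \<Rightarrow> 0
      | i # is \<Rightarrow> (if length is = m - 1 \<and> is \<noteq> [] \<and> (\<forall>x\<in>set is. x = hd is)
                   then mu n i (hd is) else 0))"

definition lpres :: "nat \<Rightarrow> int \<Rightarrow> int" where
  "lpres n a = (a - 1) mod int n + 1"

end

theory Submission
  imports Defs
begin

text \<open>If every nonzero entry of an order-m tensor A has the form a_{ij...j}, the general product
  collapses to M(A^(k+1))_{uj} = \<Sum>_l M(A)_{ul} M(A^k)_{lj}^(m-1). For nonnegative A this makes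
  S_(k+1)(A,j) the set of predecessors of S_k(A,j) in the digraph of M(A), so S_k(A,j) is the set of
  vertices with a walk of length k to j. In the digraph of M_1 the only predecessor of j \<le> n-2 is
  j+1 and that of n is 1, which gives (ii). Starting from n-1, each step shifts a cyclic window of
  residues by one, and every pass through n-1 (whose predecessors are 1 and n) widens it by one,
  which gives (i).\<close>

lemma sum_lists_concentrated_on_replicate:
  assumes "d \<ge> 1" and "finite S"
    and zero: "\<And>xs. (\<And>l. xs \<noteq> replicate d l) \<Longrightarrow> f xs = 0"
  shows "(\<Sum>xs\<in>{xs. length xs = d \<and> set xs \<subseteq> S}. f xs) = (\<Sum>l\<in>S. f (replicate d l))"
proof -
  have "(\<Sum>xs\<in>{xs. length xs = d \<and> set xs \<subseteq> S}. f xs) = (\<Sum>xs\<in>replicate d ` S. f xs)"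
  proof (rule sum.mono_neutral_right)
    show "finite {xs. length xs = d \<and> set xs \<subseteq> S}"
      using finite_lists_length_eq[OF \<open>finite S\<close>, of d] by (simp add: conj_commute)
    show "replicate d ` S \<subseteq> {xs. length xs = d \<and> set xs \<subseteq> S}"
      by auto
    show "\<forall>xs\<in>{xs. length xs = d \<and> set xs \<subseteq> S} - replicate d ` S. f xs = 0"
    proof
      fix xs assume xs: "xs \<in> {xs. length xs = d \<and> set xs \<subseteq> S} - replicate d ` S"
      show "f xs = 0"
      proof (rule zero)
        fix l show "xs \<noteq> replicate d l"
          using xs \<open>d \<ge> 1\<close> by (cases d) auto
      qed
    qed
  qed
  also have "\<dots> = (\<Sum>l\<in>S. f (replicate d l))"
    using \<open>d \<ge> 1\<close> by (intro sum.reindex[unfolded comp_def]) (auto simp: inj_on_def)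
  finally show ?thesis .
qed

definition major_supported :: "nat \<Rightarrow> tensor \<Rightarrow> bool" where
  "major_supported m A \<longleftrightarrow> (\<forall>i xs. (\<forall>l. xs \<noteq> replicate (m - 1) l) \<longrightarrow> A (i # xs) = 0)"

lemma tprod_major_supported:
  assumes "m \<ge> 2" and "major_supported m A"
  shows "tprod n m (K + 1) A B (u # replicate ((m - 1) * K) j)
       = (\<Sum>l\<in>{1..n}. A (u # replicate (m - 1) l) * B (l # replicate K j) ^ (m - 1))"
proof -
  have block: "take K (drop (i * K) (replicate ((m - 1) * K) j)) = replicate K j" if "i < m - 1" for i
  proof -
    have "K \<le> (m - 1 - i) * K"
      using that by (simp add: Suc_leI)
    then have "K \<le> (m - 1) * K - i * K"
      by (simp add: diff_mult_distrib)
    then show ?thesis by (simp add: min_def)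
  qed
  have "tprod n m (K + 1) A B (u # replicate ((m - 1) * K) j)
      = (\<Sum>xs\<in>{xs. length xs = m - 1 \<and> set xs \<subseteq> {1..n}}.
           A (u # xs) * (\<Prod>i<m - 1. B (xs ! i # replicate K j)))"
    unfolding tprod_def list.case add_diff_cancel_right'
    by (intro sum.cong arg_cong2[where f = times] prod.cong refl) (use block in auto)
  also have "\<dots> = (\<Sum>l\<in>{1..n}. A (u # replicate (m - 1) l) * (\<Prod>i<m - 1. B (l # replicate K j)))"
    using assms by (subst sum_lists_concentrated_on_replicate) (auto simp: major_supported_def)
  finally show ?thesis by simp
qed

lemma major_tpow_Suc:
  assumes "m \<ge> 2" and "major_supported m A" and "k \<ge> 1"
  shows "major ((m - 1) ^ Suc k + 1) (tpow n m A (Suc k)) u j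
       = (\<Sum>l\<in>{1..n}. major m A u l * major ((m - 1) ^ k + 1) (tpow n m A k) l j ^ (m - 1))"
proof -
  obtain k' where k: "k = Suc k'"
    using \<open>k \<ge> 1\<close> by (cases k) auto
  have "major ((m - 1) ^ Suc k + 1) (tpow n m A (Suc k)) u j
      = tprod n m ((m - 1) ^ k + 1) A (tpow n m A k) (u # replicate ((m - 1) * (m - 1) ^ k) j)"
    by (simp add: major_def k)
  also have "\<dots> = (\<Sum>l\<in>{1..n}. major m A u l * major ((m - 1) ^ k + 1) (tpow n m A k) l j ^ (m - 1))"
    using tprod_major_supported[OF assms(1,2), of n "(m - 1) ^ k" "tpow n m A k" u j]
    by (simp add: major_def)
  finally show ?thesis .
qed

lemma tpow_nonneg: "(\<And>idx. A idx \<ge> 0) \<Longrightarrow> tpow n m A k idx \<ge> 0"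
proof (induction n m A k arbitrary: idx rule: tpow.induct)
  case (3 n m A k)
  then show ?case
    by (auto simp: tprod_def split: list.splits intro!: sum_nonneg mult_nonneg_nonneg prod_nonneg)
qed auto

definition predecessors :: "nat \<Rightarrow> (nat \<Rightarrow> nat \<Rightarrow> real) \<Rightarrow> nat set \<Rightarrow> nat set" where
  "predecessors n M X = {u \<in> {1..n}. \<exists>l\<in>X. M u l > 0}"

lemma Sset_one:
  assumes "m \<ge> 1"
  shows "Sset n m A 1 j = predecessors n (major m A) {j}"
  using assms by (simp add: Sset_def predecessors_def)

lemma Sset_Suc:
  assumes "m \<ge> 2" and "major_supported m A" and "\<And>idx. A idx \<ge> 0" and "k \<ge> 1"
  shows "Sset n m A (Suc k) j = predecessors n (major m A) (Sset n m A k j)"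
proof -
  let ?M = "\<lambda>u l. major ((m - 1) ^ k + 1) (tpow n m A k) u l"
  have positive_iff: "0 < (\<Sum>l\<in>{1..n}. major m A u l * ?M l j ^ (m - 1))
    \<longleftrightarrow> (\<exists>l\<in>{1..n}. 0 < major m A u l \<and> 0 < ?M l j)" for u
  proof -
    have nonneg: "0 \<le> major m A u l" "0 \<le> ?M l j" for l
      using assms(3) tpow_nonneg[of A] by (simp_all add: major_def)
    have "0 < (\<Sum>l\<in>{1..n}. major m A u l * ?M l j ^ (m - 1))
      \<longleftrightarrow> (\<exists>l\<in>{1..n}. 0 < major m A u l * ?M l j ^ (m - 1))"
      using nonneg by (simp add: order_less_le sum_nonneg sum_nonneg_eq_0_iff)
    also have "\<dots> \<longleftrightarrow> (\<exists>l\<in>{1..n}. 0 < major m A u l \<and> 0 < ?M l j)"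
      using nonneg \<open>m \<ge> 2\<close> by (simp add: zero_less_mult_iff order_less_le)
    finally show ?thesis .
  qed
  have "Sset n m A (Suc k) j = {u \<in> {1..n}. 0 < (\<Sum>l\<in>{1..n}. major m A u l * ?M l j ^ (m - 1))}"
    unfolding Sset_def major_tpow_Suc[OF assms(1,2,4)] ..
  then show ?thesis
    unfolding positive_iff by (auto simp: Sset_def predecessors_def)
qed

lemma Sset_funpow_predecessors:
  assumes "m \<ge> 2" and "major_supported m A" and "\<And>idx. A idx \<ge> 0" and "k \<ge> 1"
  shows "Sset n m A k j = (predecessors n (major m A) ^^ k) {j}"
  using \<open>k \<ge> 1\<close>
proof (induction k rule: nat_induct_at_least)
  case base
  then show ?case using assms(1) Sset_one[of m n A j] by simp
next
  case (Suc k)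
  then show ?case using assms by (simp add: Sset_Suc)
qed

lemma A0_nonneg: "A0 n m idx \<ge> 0"
  by (auto simp: A0_def mu_def split: list.splits)

lemma A0_major_supported: "major_supported m (A0 n m)"
proof -
  have "A0 n m (i # xs) = 0" if "\<forall>l. xs \<noteq> replicate (m - 1) l" for i xs
  proof -
    have "\<not> (length xs = m - 1 \<and> (\<forall>x\<in>set xs. x = hd xs))"
      using that replicate_length_same[of xs "hd xs"] by metis
    then show ?thesis by (auto simp: A0_def)
  qed
  then show ?thesis by (simp add: major_supported_def)
qed

lemma major_A0:
  assumes "m \<ge> 2"
  shows "major m (A0 n m) = mu n"
  using assms by (intro ext) (simp add: major_def A0_def)

lemma Sset_A0:
  assumes "m \<ge> 2" and "k \<ge> 1"
  shows "Sset n m (A0 n m) k j = (predecessors n (mu n) ^^ k) {j}"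
  using Sset_funpow_predecessors[OF assms(1) A0_major_supported A0_nonneg assms(2)]
  by (simp add: major_A0[OF assms(1)])

lemma predecessors_mu_iff:
  "u \<in> predecessors n (mu n) X
     \<longleftrightarrow> u \<in> {1..n} \<and> (u = 1 \<and> (n - 1 \<in> X \<or> n \<in> X) \<or> 2 \<le> u \<and> u - 1 \<in> X)"
  by (auto simp: predecessors_def mu_def)

lemma predecessors_mu_singleton:
  assumes "1 \<le> j" and "j \<le> n - 2"
  shows "predecessors n (mu n) {j} = {Suc j}"
  using assms by (auto simp: predecessors_mu_iff)

lemma predecessors_mu_last:
  assumes "n \<ge> 2"
  shows "predecessors n (mu n) {n} = {1}"
  using assms by (auto simp: predecessors_mu_iff)

lemma funpow_predecessors_mu_singleton:
  assumes "1 \<le> j" and "j \<le> n - 1"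
  shows "(predecessors n (mu n) ^^ (n - 1 - j)) {j} = {n - 1}"
  using assms
proof (induction "n - 1 - j" arbitrary: j)
  case 0
  then show ?case by simp
next
  case (Suc d)
  then have "n - 1 - j = Suc (n - 1 - Suc j)" and "j \<le> n - 2"
    by auto
  then show ?case
    using Suc by (simp only: funpow_Suc_right comp_def predecessors_mu_singleton)
qed

definition window :: "nat \<Rightarrow> nat \<Rightarrow> nat \<Rightarrow> nat set" where
  "window n q r = {u \<in> {1..n}. u \<le> r \<and> r \<le> u + q + 1 \<or> r < u \<and> r + n \<le> u + q + 1}"

lemma predecessors_mu_penultimate:
  assumes "n \<ge> 2"
  shows "predecessors n (mu n) {n - 1} = window n 0 1"
  using assms by (auto simp: predecessors_mu_iff window_def)

lemma predecessors_mu_window_shift: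
  assumes "1 \<le> r" and "r < n - 1"
  shows "predecessors n (mu n) (window n q r) = window n q (Suc r)"
  using assms by (auto simp: predecessors_mu_iff window_def)

lemma predecessors_mu_window_wrap:
  assumes "n \<ge> 2"
  shows "predecessors n (mu n) (window n q (n - 1)) = window n (Suc q) 1"
  using assms by (auto simp: predecessors_mu_iff window_def)

lemma funpow_predecessors_mu_window:
  assumes "1 \<le> r" and "r \<le> n - 1"
  shows "(predecessors n (mu n) ^^ (r - 1)) (window n q 1) = window n q r"
  using assms
proof (induction r rule: nat_induct_at_least)
  case base
  then show ?case by simp
next
  case (Suc r)
  have "(predecessors n (mu n) ^^ r) (window n q 1)
      = predecessors n (mu n) ((predecessors n (mu n) ^^ (r - 1)) (window n q 1))"
    using \<open>1 \<le> r\<close> by (cases r) simp_all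
  then show ?case using Suc by (simp add: predecessors_mu_window_shift)
qed

lemma funpow_predecessors_mu_penultimate:
  assumes "n \<ge> 2" and "1 \<le> r" and "r \<le> n - 1"
  shows "(predecessors n (mu n) ^^ ((n - 1) * q + r)) {n - 1} = window n q r"
proof -
  let ?P = "predecessors n (mu n)"
  have start: "(?P ^^ ((n - 1) * q + 1)) {n - 1} = window n q 1" for q
  proof (induction q)
    case 0
    then show ?case using predecessors_mu_penultimate[OF assms(1)] by simp
  next
    case (Suc q)
    have split: "(n - 1) * Suc q + 1 = Suc ((n - 2) + ((n - 1) * q + 1))"
      using assms(1) by simp
    have "(?P ^^ ((n - 1) * Suc q + 1)) {n - 1} = ?P ((?P ^^ (n - 2)) (window n q 1))"
      unfolding split funpow.simps(2) funpow_add[of "n - 2" "(n - 1) * q + 1"] comp_def Suc.IH ..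
    also have "(?P ^^ (n - 2)) (window n q 1) = window n q (n - 1)"
      using funpow_predecessors_mu_window[of "n - 1" n q] assms(1) by (simp add: numeral_2_eq_2)
    also have "?P (window n q (n - 1)) = window n (Suc q) 1"
      by (rule predecessors_mu_window_wrap[OF assms(1)])
    finally show ?case .
  qed
  have split: "(n - 1) * q + r = (r - 1) + ((n - 1) * q + 1)"
    using assms(2) by simp
  have "(?P ^^ ((n - 1) * q + r)) {n - 1} = (?P ^^ (r - 1)) (window n q 1)"
    unfolding split funpow_add[of "r - 1" "(n - 1) * q + 1"] comp_def start ..
  also have "\<dots> = window n q r"
    using assms(2,3) by (rule funpow_predecessors_mu_window)
  finally show ?thesis .
qed

lemma lpres_eq:
  assumes "1 - int n \<le> i" and "i \<le> int n"
  shows "lpres n i = (if 1 \<le> i then i else i + int n)"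
proof (cases "1 \<le> i")
  case True
  then show ?thesis using assms by (simp add: lpres_def mod_pos_pos_trivial)
next
  case False
  have "(i - 1) mod int n = (i - 1 + int n) mod int n"
    by simp
  also have "\<dots> = i - 1 + int n"
    using assms False by (intro mod_pos_pos_trivial) auto
  finally show ?thesis using False by (simp add: lpres_def)
qed

lemma lpres_on_window_interval:
  assumes "q + 2 \<le> n" and "1 \<le> r" and "r \<le> n - 1" and "i \<in> {int r - int q - 1 .. int r}"
  shows "lpres n i = (if 1 \<le> i then i else i + int n)"
  using assms by (intro lpres_eq) auto

lemma int_window:
  assumes "q + 2 \<le> n" and "1 \<le> r" and "r \<le> n - 1"
  shows "int ` window n q r = lpres n ` {int r - int q - 1 .. int r}"
proof (rule set_eqI)
  note lpres_on = lpres_on_window_interval[OF assms]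
  fix x
  show "x \<in> int ` window n q r \<longleftrightarrow> x \<in> lpres n ` {int r - int q - 1 .. int r}"
  proof
    assume "x \<in> int ` window n q r"
    then obtain u where u: "u \<in> window n q r" and x: "x = int u" by blast
    show "x \<in> lpres n ` {int r - int q - 1 .. int r}"
    proof (cases "u \<le> r")
      case True
      then show ?thesis
        using u lpres_on[of "int u"] by (intro image_eqI[of _ _ "int u"]) (auto simp: x window_def)
    next
      case False
      then show ?thesis
        using u lpres_on[of "int u - int n"]
        by (intro image_eqI[of _ _ "int u - int n"]) (auto simp: x window_def)
    qed
  next
    assume "x \<in> lpres n ` {int r - int q - 1 .. int r}"
    then obtain i where i: "i \<in> {int r - int q - 1 .. int r}" and x: "x = lpres n i" by blast
    show "x \<in> int ` window n q r"
    proof (cases "1 \<le> i")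
      case True
      then show ?thesis
        using i assms lpres_on[OF i] by (intro image_eqI[of _ _ "nat i"]) (auto simp: x window_def)
    next
      case False
      then show ?thesis
        using i assms lpres_on[OF i] by (intro image_eqI[of _ _ "nat (i + int n)"]) (auto simp: x window_def)
    qed
  qed
qed

lemma inj_on_lpres:
  assumes "q + 2 \<le> n" and "1 \<le> r" and "r \<le> n - 1"
  shows "inj_on (lpres n) {int r - int q - 1 .. int r}"
proof (rule inj_onI)
  fix a b
  assume a: "a \<in> {int r - int q - 1 .. int r}" and b: "b \<in> {int r - int q - 1 .. int r}"
    and "lpres n a = lpres n b"
  then show "a = b"
    using lpres_on_window_interval[OF assms a] lpres_on_window_interval[OF assms b] assms
    by (auto split: if_splits)
qed

lemma card_window:
  assumes "q + 2 \<le> n" and "1 \<le> r" and "r \<le> n - 1"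
  shows "card (window n q r) = q + 2"
proof -
  have "card (window n q r) = card (int ` window n q r)"
    by (simp add: card_image)
  also have "\<dots> = card {int r - int q - 1 .. int r}"
    unfolding int_window[OF assms] using inj_on_lpres[OF assms] by (rule card_image)
  also have "\<dots> = q + 2"
    by simp
  finally show ?thesis .
qed

lemma Sset_A0_penultimate:
  assumes "m \<ge> 2" and "n \<ge> 2" and "1 \<le> r" and "r \<le> n - 1"
  shows "Sset n m (A0 n m) ((n - 1) * q + r) (n - 1) = window n q r"
proof -
  have k: "1 \<le> (n - 1) * q + r"
    using assms(3) by simp
  show ?thesis
    unfolding Sset_A0[OF assms(1) k] by (rule funpow_predecessors_mu_penultimate[OF assms(2-4)])
qed

lemma Sset_A0_shift:
  assumes "m \<ge> 2" and "t \<ge> 1" and "1 \<le> j" and "j \<le> n - 1"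
  shows "Sset n m (A0 n m) (t + (n - 1 - j)) j = Sset n m (A0 n m) t (n - 1)"
proof -
  have k: "1 \<le> t + (n - 1 - j)"
    using assms(2) by simp
  show ?thesis
    unfolding Sset_A0[OF assms(1) k] Sset_A0[OF assms(1,2)] funpow_add comp_def
      funpow_predecessors_mu_singleton[OF assms(3,4)] ..
qed

lemma Sset_A0_last:
  assumes "m \<ge> 2" and "n \<ge> 2" and "t \<ge> 1"
  shows "Sset n m (A0 n m) (t + n - 1) n = Sset n m (A0 n m) t (n - 1)"
proof -
  have split: "t + n - 1 = Suc (t + (n - 1 - 1))"
    using assms(2) by simp
  have k: "1 \<le> t + (n - 1 - 1)"
    using assms(3) by simp
  have "Sset n m (A0 n m) (t + n - 1) n = Sset n m (A0 n m) (t + (n - 1 - 1)) 1"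
    unfolding split Sset_A0[OF assms(1) k] Sset_A0[OF assms(1) le_SucI[OF k]]
      funpow_Suc_right comp_def predecessors_mu_last[OF assms(2)] ..
  also have "\<dots> = Sset n m (A0 n m) t (n - 1)"
    using assms by (intro Sset_A0_shift) auto
  finally show ?thesis .
qed

theorem proposition2p14:
  fixes n m :: nat
  assumes "n \<ge> 2" and "m \<ge> 2"
  shows "(\<forall>k q r. 1 \<le> k \<and> int k \<le> int n ^ 2 - 3 * int n + 2 \<and> k = (n - 1) * q + r \<and> 1 \<le> r \<and> r \<le> n - 1
            \<longrightarrow> int ` Sset n m (A0 n m) k (n - 1)
                  = lpres n ` {int r - int q - 1 .. int r}
              \<and> card (Sset n m (A0 n m) k (n - 1)) = q + 2)
       \<and> (\<forall>t \<ge> 1. (\<forall>j \<in> {1..n-2}. Sset n m (A0 n m) (t + (n - 1 - j)) j = Sset n m (A0 n m) t (n - 1))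
                 \<and> Sset n m (A0 n m) (t + n - 1) n = Sset n m (A0 n m) t (n - 1))"
proof (intro conjI allI impI ballI)
  fix k q r
  assume k: "1 \<le> k \<and> int k \<le> int n ^ 2 - 3 * int n + 2 \<and> k = (n - 1) * q + r \<and> 1 \<le> r \<and> r \<le> n - 1"
  have "int ((n - 1) * (n - 2)) = (int n - 1) * (int n - 2)"
    using assms(1) by (simp add: of_nat_diff)
  then have "int n ^ 2 - 3 * int n + 2 = int ((n - 1) * (n - 2))"
    by (simp add: power2_eq_square algebra_simps)
  then have "(n - 1) * q < (n - 1) * (n - 2)"
    using k by linarith
  then have q: "q + 2 \<le> n"
    by (simp add: nat_mult_less_cancel_disj) arith
  have S: "Sset n m (A0 n m) k (n - 1) = window n q r"
    using k assms Sset_A0_penultimate[of m n r q] by simp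
  show "int ` Sset n m (A0 n m) k (n - 1) = lpres n ` {int r - int q - 1 .. int r}"
    using S int_window[OF q] k by simp
  show "card (Sset n m (A0 n m) k (n - 1)) = q + 2"
    using S card_window[OF q] k by simp
next
  fix t j :: nat
  assume "1 \<le> t" and "j \<in> {1..n - 2}"
  then show "Sset n m (A0 n m) (t + (n - 1 - j)) j = Sset n m (A0 n m) t (n - 1)"
    using assms by (intro Sset_A0_shift) auto
next
  fix t :: nat
  assume "1 \<le> t"
  with assms show "Sset n m (A0 n m) (t + n - 1) n = Sset n m (A0 n m) t (n - 1)"
    by (intro Sset_A0_last)
qed

end
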